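(* Let $\Omega\subset\mathbb R^{n+1}$ have smooth boundary $\partial\Omega$ with $\|\mathrm{II}_{\partial\Omega}\|_{L^\infty}\le K$. Let $\gamma_t\subset\mathbb R^{n+1}$ be a smooth solution of curve shortening flow $\partial_t\gamma=\kappa N$ with free boundary on $\partial\Omega$, meeting $\partial\Omega$ orthogonally along $\partial\gamma_t$. Then at every endpoint of $\gamma_t$, $$|\partial_\mu\kappa|\le K|\kappa|,\qquad |\tau_1|\le K,$$ where $\mu$ is the outward unit conormal to $\partial\gamma_t$ in $\gamma_t$. Consequently $\partial_\mu(\kappa^2)\le 2K\kappa^2$ on $\partial\gamma_t$.
   Context: $\mathrm{II}_{\partial\Omega}$ is the second fundamental form of $\partial\Omega$. $s$ is arclength, $T=\partial_s\gamma$ the unit tangent, $\kappa=|\partial_sT|$ the curvature and $N$ the principal normal; $(T,N,B_1,\dots)$ is the Frenet frame with first torsion $\tau_1$ determined by $\partial_sN=-\kappa T+\tau_1B_1$ (defined where $\kappa\neq0$). Free boundary: the endpoints lie on $\partial\Omega$ and $T$ is orthogonal to $T\partial\Omega$ there. *)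

theory Defs
  imports "HOL-Analysis.Analysis"
begin

definition dir_deriv :: "('a::real_normed_vector \<Rightarrow> 'b::real_normed_vector) \<Rightarrow> 'a \<Rightarrow> 'a \<Rightarrow> 'b" where
  "dir_deriv f x v = vector_derivative (\<lambda>h::real. f (x + h *\<^sub>R v)) (at 0)"

fun iter_dir_deriv :: "'a::real_normed_vector list \<Rightarrow> ('a \<Rightarrow> 'b::real_normed_vector) \<Rightarrow> 'a \<Rightarrow> 'b" where
  "iter_dir_deriv [] f = f"
| "iter_dir_deriv (v # vs) f = (\<lambda>x. dir_deriv (iter_dir_deriv vs f) x v)"

definition C_inf_on :: "'a::euclidean_space set \<Rightarrow> ('a \<Rightarrow> 'b::real_normed_vector) \<Rightarrow> bool" where
  "C_inf_on S f \<longleftrightarrow> open S \<and>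
     (\<forall>vs. continuous_on S (iter_dir_deriv vs f) \<and>
        (\<forall>x\<in>S. \<forall>v. (\<lambda>h::real. iter_dir_deriv vs f (x + h *\<^sub>R v)) differentiable (at 0)))"

definition grad :: "(real^'n \<Rightarrow> real) \<Rightarrow> real^'n \<Rightarrow> real^'n" where
  "grad \<phi> x = (\<chi> i. dir_deriv \<phi> x (axis i 1))"

definition local_defining_fn :: "(real^'n) set \<Rightarrow> real^'n \<Rightarrow> (real^'n) set \<Rightarrow> (real^'n \<Rightarrow> real) \<Rightarrow> bool" where
  "local_defining_fn \<Omega> p V \<phi> \<longleftrightarrow> open V \<and> p \<in> V \<and> C_inf_on V \<phi> \<and>
     (\<forall>x\<in>V. grad \<phi> x \<noteq> 0) \<and> \<Omega> \<inter> V = {x\<in>V. \<phi> x < 0}"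

definition smooth_boundary :: "(real^'n) set \<Rightarrow> bool" where
  "smooth_boundary \<Omega> \<longleftrightarrow> open \<Omega> \<and> (\<forall>p\<in>frontier \<Omega>. \<exists>V \<phi>. local_defining_fn \<Omega> p V \<phi>)"

definition bdry_tangent_space :: "(real^'n) set \<Rightarrow> real^'n \<Rightarrow> (real^'n) set" where
  "bdry_tangent_space \<Omega> p = {X. \<exists>V \<phi>. local_defining_fn \<Omega> p V \<phi> \<and> X \<bullet> grad \<phi> p = 0}"

definition unit_normal_of :: "(real^'n \<Rightarrow> real) \<Rightarrow> real^'n \<Rightarrow> real^'n" where
  "unit_normal_of \<phi> x = grad \<phi> x /\<^sub>R norm (grad \<phi> x)"

(* ||II_{\<partial>\<Omega>}||_{L^\<infinity>} \<le> K, with II(X,Y) = <D_X \<nu>, Y> for X, Y tangent *)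
definition II_bounded :: "(real^'n) set \<Rightarrow> real \<Rightarrow> bool" where
  "II_bounded \<Omega> K \<longleftrightarrow> (\<forall>p\<in>frontier \<Omega>. \<forall>V \<phi>. local_defining_fn \<Omega> p V \<phi> \<longrightarrow>
     (\<forall>X Y. X \<bullet> grad \<phi> p = 0 \<longrightarrow> Y \<bullet> grad \<phi> p = 0 \<longrightarrow>
        \<bar>dir_deriv (unit_normal_of \<phi>) p X \<bullet> Y\<bar> \<le> K * norm X * norm Y))"

definition speed :: "(real \<Rightarrow> real^'n) \<Rightarrow> real \<Rightarrow> real" where
  "speed c u = norm (vector_derivative c (at u))"

definition arc_deriv :: "(real \<Rightarrow> real^'n) \<Rightarrow> (real \<Rightarrow> real^'n) \<Rightarrow> real \<Rightarrow> real^'n" where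
  "arc_deriv c f u = vector_derivative f (at u) /\<^sub>R speed c u"

definition unit_tangent :: "(real \<Rightarrow> real^'n) \<Rightarrow> real \<Rightarrow> real^'n" where
  "unit_tangent c u = arc_deriv c c u"

definition curvature_vec :: "(real \<Rightarrow> real^'n) \<Rightarrow> real \<Rightarrow> real^'n" where
  "curvature_vec c u = arc_deriv c (unit_tangent c) u"

definition curvature :: "(real \<Rightarrow> real^'n) \<Rightarrow> real \<Rightarrow> real" where
  "curvature c u = norm (curvature_vec c u)"

definition principal_normal :: "(real \<Rightarrow> real^'n) \<Rightarrow> real \<Rightarrow> real^'n" where
  "principal_normal c u = curvature_vec c u /\<^sub>R curvature c u"

(* |\<tau>_1|, where \<partial>_s N = -\<kappa> T + \<tau>_1 B_1 with B_1 a unit vector (meaningful where \<kappa> \<noteq> 0) *)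
definition torsion1_abs :: "(real \<Rightarrow> real^'n) \<Rightarrow> real \<Rightarrow> real" where
  "torsion1_abs c u = norm (arc_deriv c (principal_normal c) u + curvature c u *\<^sub>R unit_tangent c u)"

(* derivative of a scalar f along the outward unit conormal at the endpoint e \<in> {0,1}
   of the curve parametrised over [0,1] *)
definition conormal_deriv :: "(real \<Rightarrow> real^'n) \<Rightarrow> (real \<Rightarrow> real) \<Rightarrow> real \<Rightarrow> real" where
  "conormal_deriv c f e = (if e = 0 then -1 else 1) * deriv f e / speed c e"

end

theory Submission
  imports Defs
begin

(* Let S = |\<partial>\<^sub>u\<gamma>| be the speed, T the unit tangent and \<kappa>N = \<partial>\<^sub>sT the curvature vector.
   At an endpoint \<partial>\<^sub>u\<gamma> is parallel to the unit normal \<nu> of \<partial>\<Omega> at all times, so the part of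
   \<partial>\<^sub>t\<partial>\<^sub>u\<gamma> orthogonal to T is \<plusminus>S d\<nu>(\<partial>\<^sub>t\<gamma>). As \<partial>\<^sub>t\<gamma> = \<kappa>N is tangent to \<partial>\<Omega>, the bound on the
   second fundamental form makes this part at most K S \<kappa> in norm. By the flow equation and the
   symmetry of second derivatives, \<partial>\<^sub>t\<partial>\<^sub>u\<gamma> = \<partial>\<^sub>u(\<kappa>N) = S (\<partial>\<^sub>s\<kappa> N - \<kappa>\<^sup>2 T + \<kappa>\<tau>\<^sub>1 B\<^sub>1), whose
   part orthogonal to T has norm S ((\<partial>\<^sub>s\<kappa>)\<^sup>2 + \<kappa>\<^sup>2\<tau>\<^sub>1\<^sup>2)^(1/2). Hence |\<partial>\<^sub>s\<kappa>| \<le> K\<kappa> and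
   |\<tau>\<^sub>1| \<le> K. *)

section \<open>Derivatives of curves\<close>

lemma norm_diff_le_of_vector_derivative_bound:
  fixes g :: "real \<Rightarrow> 'b::real_normed_vector"
  assumes deriv: "\<And>r. r \<in> closed_segment a b \<Longrightarrow> (g has_vector_derivative g' r) (at r)"
    and bound: "\<And>r. r \<in> closed_segment a b \<Longrightarrow> norm (g' r) \<le> B"
  shows "norm (g b - g a) \<le> B * \<bar>b - a\<bar>"
proof -
  have "norm (g b - g a) \<le> B * norm (b - a)"
  proof (rule differentiable_bound[where f'="\<lambda>r h. h *\<^sub>R g' r"])
    fix x assume x: "x \<in> closed_segment a b"
    show "(g has_derivative (\<lambda>h. h *\<^sub>R g' x)) (at x within closed_segment a b)"
      using deriv[OF x] by (simp add: has_vector_derivative_def has_derivative_at_withinI)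
    have "onorm (\<lambda>h::real. h) = 1"
      using onorm_id by (simp add: id_def)
    then show "onorm (\<lambda>h. h *\<^sub>R g' x) \<le> B"
      using onorm_scaleR_left_lemma[OF bounded_linear_ident, of "g' x"] bound[OF x] by simp
  qed auto
  then show ?thesis by simp
qed

lemma has_real_derivative_inner:
  fixes f g :: "real \<Rightarrow> 'a::real_inner"
  assumes "(f has_vector_derivative f') (at x)" "(g has_vector_derivative g') (at x)"
  shows "((\<lambda>x. f x \<bullet> g x) has_real_derivative f x \<bullet> g' + f' \<bullet> g x) (at x)"
proof -
  have "((\<lambda>x. f x \<bullet> g x) has_derivative (\<lambda>h. f x \<bullet> (h *\<^sub>R g') + (h *\<^sub>R f') \<bullet> g x)) (at x)"
    using assms by (intro has_derivative_inner) (simp_all add: has_vector_derivative_def)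
  moreover have "(\<lambda>h. f x \<bullet> (h *\<^sub>R g') + (h *\<^sub>R f') \<bullet> g x) = (*) (f x \<bullet> g' + f' \<bullet> g x)"
    by (simp add: fun_eq_iff algebra_simps)
  ultimately show ?thesis by (simp add: has_field_derivative_def)
qed

lemma has_real_derivative_norm:
  fixes f :: "real \<Rightarrow> 'a::real_inner"
  assumes "(f has_vector_derivative f') (at x)" "f x \<noteq> 0"
  shows "((\<lambda>x. norm (f x)) has_real_derivative (f x \<bullet> f') / norm (f x)) (at x)"
proof -
  have "((\<lambda>x. norm (f x)) has_derivative (\<lambda>h. (h *\<^sub>R f') \<bullet> sgn (f x))) (at x)"
    using has_derivative_compose[OF assms(1)[unfolded has_vector_derivative_def] has_derivative_norm[OF assms(2)]] .
  moreover have "(\<lambda>h. (h *\<^sub>R f') \<bullet> sgn (f x)) = (*) ((f x \<bullet> f') / norm (f x))"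
    unfolding sgn_div_norm fun_eq_iff by (simp add: inner_commute divide_inverse)
  ultimately show ?thesis by (simp add: has_field_derivative_def)
qed

lemma has_real_derivative_norm_of_vanishing:
  fixes f :: "real \<Rightarrow> 'a::real_normed_vector"
  assumes "(f has_vector_derivative 0) (at x)" "f x = 0"
  shows "((\<lambda>x. norm (f x)) has_real_derivative 0) (at x)"
proof -
  have "\<forall>e>0. \<exists>d>0. \<forall>y. norm (y - x) < d \<longrightarrow> norm (f y - f x - 0) \<le> e * norm (y - x)"
    using assms(1) unfolding has_vector_derivative_def has_derivative_at_alt by simp
  then have "((\<lambda>x. norm (f x)) has_derivative (\<lambda>h. 0)) (at x)"
    unfolding has_derivative_at_alt using assms(2) by simp
  then show ?thesis by (simp add: has_field_derivative_def lambda_zero)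
qed

lemma has_vector_derivative_normalize:
  fixes f :: "real \<Rightarrow> 'a::real_inner"
  assumes "(f has_vector_derivative f') (at x)" "f x \<noteq> 0"
  shows "((\<lambda>x. f x /\<^sub>R norm (f x)) has_vector_derivative
           f' /\<^sub>R norm (f x) - ((f x \<bullet> f') / norm (f x) ^ 3) *\<^sub>R f x) (at x)"
proof -
  have "((\<lambda>x. inverse (norm (f x))) has_real_derivative
          - ((f x \<bullet> f') / norm (f x) * inverse ((norm (f x))\<^sup>2))) (at x)"
    using DERIV_inverse_fun[OF has_real_derivative_norm[OF assms]] assms(2) by (simp add: power2_eq_square)
  from has_vector_derivative_scaleR[OF this assms(1)] show ?thesis
    by (simp add: power2_eq_square power3_eq_cube divide_inverse inverse_mult_distrib mult_ac)
qed

lemma has_vector_derivative_unique_on_open: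
  fixes f g :: "real \<Rightarrow> 'a::real_normed_vector"
  assumes "(f has_vector_derivative D) (at x)" "(g has_vector_derivative E) (at x)"
    and "open I" "x \<in> I" "\<And>y. y \<in> I \<Longrightarrow> f y = g y"
  shows "D = E"
  using has_vector_derivative_transform_within_open[OF assms(1,3,4) assms(5)] assms(2)
  by (rule vector_derivative_unique_at)

lemma has_vector_derivative_const_on_open:
  fixes f :: "real \<Rightarrow> 'a::real_normed_vector"
  assumes "(f has_vector_derivative D) (at x)" "open I" "x \<in> I" "\<And>y. y \<in> I \<Longrightarrow> f y = c"
  shows "D = 0"
  using has_vector_derivative_unique_on_open[OF assms(1) has_vector_derivative_const assms(2-4)] .

lemma has_vector_derivative_unique_01:
  fixes f :: "real \<Rightarrow> 'a::real_normed_vector"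
  assumes "(f has_vector_derivative a) (at e within {0..1})" "(f has_vector_derivative b) (at e within {0..1})"
    and "e \<in> {0..1}"
  shows "a = b"
  using vector_derivative_unique_within_closed_interval[of 0 1 e f a b] assms by (simp add: cbox_interval)

lemma has_vector_derivative_comp_has_derivative:
  assumes "(f has_vector_derivative v) (at t)" "(g has_derivative D) (at (f t))"
  shows "((\<lambda>s. g (f s)) has_vector_derivative D v) (at t)"
proof -
  have "((\<lambda>s. g (f s)) has_derivative (\<lambda>h. D (h *\<^sub>R v))) (at t)"
    using has_derivative_compose[OF assms(1)[unfolded has_vector_derivative_def] assms(2)] .
  moreover have "(\<lambda>h. D (h *\<^sub>R v)) = (\<lambda>h. h *\<^sub>R D v)"
    using has_derivative_bounded_linear[OF assms(2)] by (simp add: bounded_linear.linear linear_cmul)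
  ultimately show ?thesis
    by (simp add: has_vector_derivative_def)
qed

section \<open>Symmetry of mixed partial derivatives\<close>

lemma abs_diff_le_of_mem_closed_segment:
  fixes r a b :: real
  assumes "r \<in> closed_segment a b"
  shows "\<bar>r - a\<bar> \<le> \<bar>b - a\<bar>"
  using dist_in_closed_segment[OF assms] by (simp add: dist_real_def abs_minus_commute)

lemma eventually_nhds_box:
  fixes t e :: real
  assumes "eventually P (nhds (t, e))"
  obtains \<delta> where "\<delta> > 0" "\<And>r w. \<bar>r - t\<bar> < \<delta> \<Longrightarrow> \<bar>w - e\<bar> < \<delta> \<Longrightarrow> P (r, w)"
proof -
  obtain \<rho> where \<rho>: "\<rho> > 0" "\<And>z. dist z (t, e) < \<rho> \<Longrightarrow> P z"
    using assms unfolding eventually_nhds_metric by blast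
  have "dist (r, w) (t, e) < \<rho>" if "\<bar>r - t\<bar> < \<rho> / 2" "\<bar>w - e\<bar> < \<rho> / 2" for r w
    using sqrt_sum_squares_le_sum_abs[of "r - t" "w - e"] that
    by (simp add: dist_Pair_Pair dist_real_def)
  then show ?thesis
    using that[of "\<rho> / 2"] \<rho> by auto
qed

text \<open>Two applications of the mean value theorem to the mixed difference, first in \<open>r\<close>, then in \<open>w\<close>.\<close>

lemma mixed_difference_approx:
  fixes F P Q :: "real \<Rightarrow> real \<Rightarrow> 'b::real_normed_vector"
  assumes "\<delta>0 > 0"
    and dP: "\<And>r w. \<bar>r - t\<bar> < \<delta>0 \<Longrightarrow> \<bar>w - e\<bar> < \<delta>0 \<Longrightarrow> ((\<lambda>r. F r w) has_vector_derivative P r w) (at r)"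
    and dQ: "\<And>r w. \<bar>r - t\<bar> < \<delta>0 \<Longrightarrow> \<bar>w - e\<bar> < \<delta>0 \<Longrightarrow> ((\<lambda>w. P r w) has_vector_derivative Q r w) (at w)"
    and cQ: "\<And>\<epsilon>. \<epsilon> > 0 \<Longrightarrow> \<exists>\<delta>>0. \<forall>r w. \<bar>r - t\<bar> < \<delta> \<longrightarrow> \<bar>w - e\<bar> < \<delta> \<longrightarrow> norm (Q r w - Q t e) \<le> \<epsilon>"
    and "\<epsilon> > 0"
  shows "\<exists>\<delta>>0. \<forall>h k. \<bar>h\<bar> < \<delta> \<longrightarrow> \<bar>k\<bar> < \<delta> \<longrightarrow>
     norm (F (t+h) (e+k) - F (t+h) e - F t (e+k) + F t e - (h*k) *\<^sub>R Q t e) \<le> \<epsilon> * \<bar>h\<bar> * \<bar>k\<bar>"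
proof -
  obtain \<delta>1 where "\<delta>1 > 0" and \<delta>1: "\<And>r w. \<bar>r - t\<bar> < \<delta>1 \<Longrightarrow> \<bar>w - e\<bar> < \<delta>1 \<Longrightarrow> norm (Q r w - Q t e) \<le> \<epsilon>"
    using cQ[OF \<open>\<epsilon> > 0\<close>] by blast
  define \<delta> where "\<delta> = min \<delta>0 \<delta>1"
  have "\<delta> > 0" using \<open>\<delta>0 > 0\<close> \<open>\<delta>1 > 0\<close> by (simp add: \<delta>_def)
  have inner: "norm (P r (e+k) - P r e - k *\<^sub>R Q t e) \<le> \<epsilon> * \<bar>k\<bar>"
    if r: "\<bar>r - t\<bar> < \<delta>" and k: "\<bar>k\<bar> < \<delta>" for r k
  proof -
    have "norm ((P r (e+k) - (e+k) *\<^sub>R Q t e) - (P r e - e *\<^sub>R Q t e)) \<le> \<epsilon> * \<bar>(e+k) - e\<bar>"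
    proof (rule norm_diff_le_of_vector_derivative_bound[where g'="\<lambda>w. Q r w - Q t e"])
      fix w assume "w \<in> closed_segment e (e+k)"
      then have w: "\<bar>w - e\<bar> < \<delta>" using abs_diff_le_of_mem_closed_segment k by fastforce
      show "((\<lambda>w. P r w - w *\<^sub>R Q t e) has_vector_derivative Q r w - Q t e) (at w)"
        using dQ[of r w] r w by (auto simp: \<delta>_def intro!: derivative_eq_intros)
      show "norm (Q r w - Q t e) \<le> \<epsilon>"
        using \<delta>1 r w by (simp add: \<delta>_def)
    qed
    then show ?thesis by (simp add: algebra_simps)
  qed
  have "norm (F (t+h) (e+k) - F (t+h) e - F t (e+k) + F t e - (h*k) *\<^sub>R Q t e) \<le> \<epsilon> * \<bar>h\<bar> * \<bar>k\<bar>"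
    if h: "\<bar>h\<bar> < \<delta>" and k: "\<bar>k\<bar> < \<delta>" for h k
  proof -
    have "norm ((F (t+h) (e+k) - F (t+h) e - ((t+h)*k) *\<^sub>R Q t e) - (F t (e+k) - F t e - (t*k) *\<^sub>R Q t e))
          \<le> (\<epsilon> * \<bar>k\<bar>) * \<bar>(t+h) - t\<bar>"
    proof (rule norm_diff_le_of_vector_derivative_bound[where g'="\<lambda>r. P r (e+k) - P r e - k *\<^sub>R Q t e"])
      fix r assume "r \<in> closed_segment t (t+h)"
      then have r: "\<bar>r - t\<bar> < \<delta>" using abs_diff_le_of_mem_closed_segment h by fastforce
      show "((\<lambda>r. F r (e+k) - F r e - (r*k) *\<^sub>R Q t e) has_vector_derivative
              P r (e+k) - P r e - k *\<^sub>R Q t e) (at r)"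
        using dP[of r "e+k"] dP[of r e] r k \<open>\<delta>0 > 0\<close>
        by (auto simp: \<delta>_def intro!: derivative_eq_intros)
      show "norm (P r (e+k) - P r e - k *\<^sub>R Q t e) \<le> \<epsilon> * \<bar>k\<bar>"
        using inner r k by blast
    qed
    then show ?thesis by (simp add: algebra_simps)
  qed
  then show ?thesis using \<open>\<delta> > 0\<close> by blast
qed

lemma mixed_difference_quotient_tendsto:
  fixes F P Q :: "real \<Rightarrow> real \<Rightarrow> 'b::real_normed_vector"
  assumes "\<delta>0 > 0"
    and "\<And>r w. \<bar>r - t\<bar> < \<delta>0 \<Longrightarrow> \<bar>w - e\<bar> < \<delta>0 \<Longrightarrow> ((\<lambda>r. F r w) has_vector_derivative P r w) (at r)"
    and "\<And>r w. \<bar>r - t\<bar> < \<delta>0 \<Longrightarrow> \<bar>w - e\<bar> < \<delta>0 \<Longrightarrow> ((\<lambda>w. P r w) has_vector_derivative Q r w) (at w)"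
    and "\<And>\<epsilon>. \<epsilon> > 0 \<Longrightarrow> \<exists>\<delta>>0. \<forall>r w. \<bar>r - t\<bar> < \<delta> \<longrightarrow> \<bar>w - e\<bar> < \<delta> \<longrightarrow> norm (Q r w - Q t e) \<le> \<epsilon>"
  shows "((\<lambda>h. (F (t+h) (e+h) - F (t+h) e - F t (e+h) + F t e) /\<^sub>R h\<^sup>2) \<longlongrightarrow> Q t e) (at 0)"
proof (rule LIM_I)
  fix \<epsilon> :: real assume "\<epsilon> > 0"
  then obtain \<delta> where "\<delta> > 0" and \<delta>: "\<And>h. \<bar>h\<bar> < \<delta> \<Longrightarrow>
      norm (F (t+h) (e+h) - F (t+h) e - F t (e+h) + F t e - (h*h) *\<^sub>R Q t e) \<le> \<epsilon>/2 * \<bar>h\<bar> * \<bar>h\<bar>"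
    using mixed_difference_approx[OF assms, of "\<epsilon>/2"] by (metis half_gt_zero)
  have "norm ((F (t+h) (e+h) - F (t+h) e - F t (e+h) + F t e) /\<^sub>R h\<^sup>2 - Q t e) < \<epsilon>"
    if "h \<noteq> 0" "norm h < \<delta>" for h
  proof -
    have "(F (t+h) (e+h) - F (t+h) e - F t (e+h) + F t e) /\<^sub>R h\<^sup>2 - Q t e
        = (F (t+h) (e+h) - F (t+h) e - F t (e+h) + F t e - (h*h) *\<^sub>R Q t e) /\<^sub>R h\<^sup>2"
      using \<open>h \<noteq> 0\<close> by (simp add: power2_eq_square scaleR_diff_right field_simps)
    then have "norm ((F (t+h) (e+h) - F (t+h) e - F t (e+h) + F t e) /\<^sub>R h\<^sup>2 - Q t e)
        = norm (F (t+h) (e+h) - F (t+h) e - F t (e+h) + F t e - (h*h) *\<^sub>R Q t e) / h\<^sup>2"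
      by (simp add: divide_inverse mult.commute)
    also have "\<dots> \<le> \<epsilon>/2"
      using \<delta>[of h] that by (simp add: power2_eq_square abs_mult_self_eq divide_le_eq mult.assoc)
    finally show ?thesis using \<open>\<epsilon> > 0\<close> by linarith
  qed
  then show "\<exists>\<delta>>0. \<forall>h. h \<noteq> 0 \<and> norm (h - 0) < \<delta> \<longrightarrow>
      norm ((F (t+h) (e+h) - F (t+h) e - F t (e+h) + F t e) /\<^sub>R h\<^sup>2 - Q t e) < \<epsilon>"
    using \<open>\<delta> > 0\<close> by auto
qed

lemma continuous_on_box:
  fixes Q :: "real \<times> real \<Rightarrow> 'b::real_normed_vector"
  assumes "continuous_on U Q" "open U" "(t, e) \<in> U" "\<epsilon> > 0"
  shows "\<exists>\<delta>>0. \<forall>r w. \<bar>r - t\<bar> < \<delta> \<longrightarrow> \<bar>w - e\<bar> < \<delta> \<longrightarrow> norm (Q (r, w) - Q (t, e)) \<le> \<epsilon>"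
proof -
  have "(Q \<longlongrightarrow> Q (t, e)) (nhds (t, e))"
    using assms(1-3) by (simp add: continuous_on_eq_continuous_at isCont_def tendsto_at_iff_tendsto_nhds)
  then have "eventually (\<lambda>z. norm (Q z - Q (t, e)) < \<epsilon>) (nhds (t, e))"
    using \<open>\<epsilon> > 0\<close> by (simp add: tendsto_iff dist_norm)
  then show ?thesis
    by (elim eventually_nhds_box) (auto intro: less_imp_le)
qed

lemma mixed_partials_commute:
  fixes F Fr Fw Frw Fwr :: "real \<times> real \<Rightarrow> 'b::real_normed_vector"
  assumes U: "open U" "(t, e) \<in> U"
    and Fr: "\<And>r w. (r, w) \<in> U \<Longrightarrow> ((\<lambda>r. F (r, w)) has_vector_derivative Fr (r, w)) (at r)"
    and Frw: "\<And>r w. (r, w) \<in> U \<Longrightarrow> ((\<lambda>w. Fr (r, w)) has_vector_derivative Frw (r, w)) (at w)"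
    and Fw: "\<And>r w. (r, w) \<in> U \<Longrightarrow> ((\<lambda>w. F (r, w)) has_vector_derivative Fw (r, w)) (at w)"
    and Fwr: "\<And>r w. (r, w) \<in> U \<Longrightarrow> ((\<lambda>r. Fw (r, w)) has_vector_derivative Fwr (r, w)) (at r)"
    and "continuous_on U Frw" "continuous_on U Fwr"
  shows "Frw (t, e) = Fwr (t, e)"
proof -
  obtain \<delta> where "\<delta> > 0" and box: "\<And>r w. \<bar>r - t\<bar> < \<delta> \<Longrightarrow> \<bar>w - e\<bar> < \<delta> \<Longrightarrow> (r, w) \<in> U"
    using eventually_nhds_box[OF eventually_nhds_in_open[OF U]] by blast
  define \<Delta> where "\<Delta> h = F (t+h, e+h) - F (t+h, e) - F (t, e+h) + F (t, e)" for h
  have "((\<lambda>h. \<Delta> h /\<^sub>R h\<^sup>2) \<longlongrightarrow> Frw (t, e)) (at 0)"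
    using mixed_difference_quotient_tendsto[of \<delta> t e "\<lambda>r w. F (r, w)" "\<lambda>r w. Fr (r, w)" "\<lambda>r w. Frw (r, w)"]
      \<open>\<delta> > 0\<close> box Fr Frw continuous_on_box[OF \<open>continuous_on U Frw\<close> U]
    by (simp add: \<Delta>_def)
  moreover have "((\<lambda>h. \<Delta> h /\<^sub>R h\<^sup>2) \<longlongrightarrow> Fwr (t, e)) (at 0)"
  proof -
    have "\<exists>\<delta>>0. \<forall>w r. \<bar>w - e\<bar> < \<delta> \<longrightarrow> \<bar>r - t\<bar> < \<delta> \<longrightarrow> norm (Fwr (r, w) - Fwr (t, e)) \<le> \<epsilon>"
      if "\<epsilon> > 0" for \<epsilon>
      using continuous_on_box[OF \<open>continuous_on U Fwr\<close> U that] by blast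
    then show ?thesis
      using mixed_difference_quotient_tendsto[of \<delta> e t "\<lambda>w r. F (r, w)" "\<lambda>w r. Fw (r, w)" "\<lambda>w r. Fwr (r, w)"]
        \<open>\<delta> > 0\<close> box Fw Fwr
      by (simp add: \<Delta>_def algebra_simps)
  qed
  ultimately show ?thesis
    by (rule tendsto_unique[rotated]) simp
qed

section \<open>Smooth functions\<close>

lemma has_vector_derivative_along_line:
  assumes "(\<lambda>h::real. F (x + h *\<^sub>R v)) differentiable (at 0)" and "x = y + r0 *\<^sub>R v"
  shows "((\<lambda>r. F (y + r *\<^sub>R v)) has_vector_derivative dir_deriv F x v) (at r0)"
proof -
  have "((\<lambda>h::real. F (x + h *\<^sub>R v)) has_vector_derivative dir_deriv F x v) (at 0)"
    using assms(1) unfolding dir_deriv_def by (simp add: vector_derivative_works[symmetric])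
  then have "(((\<lambda>h::real. F (x + h *\<^sub>R v)) \<circ> (\<lambda>r. r - r0)) has_vector_derivative 1 *\<^sub>R dir_deriv F x v) (at r0)"
    by (intro vector_diff_chain_at) (auto intro!: derivative_eq_intros)
  moreover have "(\<lambda>h::real. F (x + h *\<^sub>R v)) \<circ> (\<lambda>r. r - r0) = (\<lambda>r. F (y + r *\<^sub>R v))"
    using assms(2) by (auto simp: fun_eq_iff algebra_simps)
  ultimately show ?thesis by simp
qed

lemma norm_partial_Basis_expansion_le:
  fixes h :: "'a::euclidean_space"
  assumes "B \<subseteq> Basis" "a \<in> Basis" "a \<notin> B" "finite B" "\<bar>\<rho>\<bar> \<le> \<bar>h \<bullet> a\<bar>"
  shows "norm ((\<Sum>b\<in>B. (h \<bullet> b) *\<^sub>R b) + \<rho> *\<^sub>R a) \<le> norm h"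
proof (rule norm_le_componentwise)
  fix b' :: 'a assume b': "b' \<in> Basis"
  have "(\<Sum>b\<in>B. (h \<bullet> b) *\<^sub>R b) \<bullet> b' = (\<Sum>b\<in>B. (h \<bullet> b) * (if b = b' then 1 else 0))"
    unfolding inner_sum_left using assms b' by (intro sum.cong) (auto simp: inner_Basis)
  also have "\<dots> = (if b' \<in> B then h \<bullet> b' else 0)"
    using \<open>finite B\<close> by (simp add: if_distrib sum.delta' cong: if_cong)
  finally show "\<bar>((\<Sum>b\<in>B. (h \<bullet> b) *\<^sub>R b) + \<rho> *\<^sub>R a) \<bullet> b'\<bar> \<le> \<bar>h \<bullet> b'\<bar>"
    using assms b' by (auto simp: inner_add_left inner_Basis)
qed

text \<open>Moving from \<open>x\<close> to \<open>x + h\<close> one coordinate direction at a time, each step is controlled by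
  the mean value theorem for the corresponding directional derivative.\<close>

lemma increment_along_Basis_bound:
  fixes f :: "'a::euclidean_space \<Rightarrow> 'b::real_normed_vector"
  assumes dif: "\<And>y v. y \<in> ball x r \<Longrightarrow> (\<lambda>h::real. f (y + h *\<^sub>R v)) differentiable (at 0)"
    and close: "\<And>z b. z \<in> ball x r \<Longrightarrow> b \<in> Basis \<Longrightarrow> norm (dir_deriv f z b - dir_deriv f x b) \<le> \<epsilon>"
    and "finite B" "B \<subseteq> Basis" and h: "norm h < r"
  shows "norm (f (x + (\<Sum>b\<in>B. (h \<bullet> b) *\<^sub>R b)) - f x - (\<Sum>b\<in>B. (h \<bullet> b) *\<^sub>R dir_deriv f x b))
           \<le> \<epsilon> * (\<Sum>b\<in>B. \<bar>h \<bullet> b\<bar>)"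
  using \<open>finite B\<close> \<open>B \<subseteq> Basis\<close>
proof (induction B rule: finite_subset_induct')
  case empty
  then show ?case by simp
next
  case (insert a B)
  define y where "y = x + (\<Sum>b\<in>B. (h \<bullet> b) *\<^sub>R b)"
  define c where "c = h \<bullet> a"
  have in_ball: "y + \<rho> *\<^sub>R a \<in> ball x r" if "\<rho> \<in> closed_segment 0 c" for \<rho>
  proof -
    have "\<bar>\<rho>\<bar> \<le> \<bar>c\<bar>" using abs_diff_le_of_mem_closed_segment[OF that] by simp
    then have "norm ((\<Sum>b\<in>B. (h \<bullet> b) *\<^sub>R b) + \<rho> *\<^sub>R a) \<le> norm h"
      using insert by (intro norm_partial_Basis_expansion_le) (auto simp: c_def)
    then show ?thesis
      using h norm_minus_cancel[of "(\<Sum>b\<in>B. (h \<bullet> b) *\<^sub>R b) + \<rho> *\<^sub>R a"] by (simp add: y_def dist_norm)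
  qed
  have step: "norm ((f (y + c *\<^sub>R a) - c *\<^sub>R dir_deriv f x a) - (f (y + 0 *\<^sub>R a) - 0 *\<^sub>R dir_deriv f x a))
      \<le> \<epsilon> * \<bar>c - 0\<bar>"
  proof (rule norm_diff_le_of_vector_derivative_bound[where g'="\<lambda>\<rho>. dir_deriv f (y + \<rho> *\<^sub>R a) a - dir_deriv f x a"])
    fix \<rho> assume \<rho>: "\<rho> \<in> closed_segment 0 c"
    have "((\<lambda>r. f (y + r *\<^sub>R a)) has_vector_derivative dir_deriv f (y + \<rho> *\<^sub>R a) a) (at \<rho>)"
      using in_ball[OF \<rho>] by (intro has_vector_derivative_along_line dif) auto
    then show "((\<lambda>\<rho>. f (y + \<rho> *\<^sub>R a) - \<rho> *\<^sub>R dir_deriv f x a) has_vector_derivative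
                  dir_deriv f (y + \<rho> *\<^sub>R a) a - dir_deriv f x a) (at \<rho>)"
      by (auto intro!: derivative_eq_intros)
    show "norm (dir_deriv f (y + \<rho> *\<^sub>R a) a - dir_deriv f x a) \<le> \<epsilon>"
      using close in_ball[OF \<rho>] insert by auto
  qed
  have "norm (f (x + (\<Sum>b\<in>insert a B. (h \<bullet> b) *\<^sub>R b)) - f x - (\<Sum>b\<in>insert a B. (h \<bullet> b) *\<^sub>R dir_deriv f x b))
      = norm ((f (y + c *\<^sub>R a) - f y - c *\<^sub>R dir_deriv f x a) + (f y - f x - (\<Sum>b\<in>B. (h \<bullet> b) *\<^sub>R dir_deriv f x b)))"
    using insert by (simp add: y_def c_def algebra_simps)
  also have "\<dots> \<le> \<epsilon> * \<bar>c\<bar> + \<epsilon> * (\<Sum>b\<in>B. \<bar>h \<bullet> b\<bar>)"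
    using step insert.IH by (intro norm_triangle_le add_mono) (auto simp: y_def algebra_simps)
  also have "\<dots> = \<epsilon> * (\<Sum>b\<in>insert a B. \<bar>h \<bullet> b\<bar>)"
    using insert by (simp add: c_def algebra_simps)
  finally show ?case .
qed

lemma has_derivative_of_continuous_dir_deriv:
  fixes f :: "'a::euclidean_space \<Rightarrow> 'b::real_normed_vector"
  assumes "open S" "x \<in> S"
    and dif: "\<And>y v. y \<in> S \<Longrightarrow> (\<lambda>h::real. f (y + h *\<^sub>R v)) differentiable (at 0)"
    and cont: "\<And>v. continuous_on S (\<lambda>y. dir_deriv f y v)"
  shows "(f has_derivative (\<lambda>v. \<Sum>b\<in>Basis. (v \<bullet> b) *\<^sub>R dir_deriv f x b)) (at x)"
  unfolding has_derivative_at_alt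
proof (intro conjI allI impI)
  show "bounded_linear (\<lambda>v. \<Sum>b\<in>Basis. (v \<bullet> b) *\<^sub>R dir_deriv f x b)"
    by (intro bounded_linear_sum bounded_linear_scaleR_const bounded_linear_inner_left)
  fix \<epsilon> :: real assume "\<epsilon> > 0"
  define \<epsilon>' where "\<epsilon>' = \<epsilon> / DIM('a)"
  have "\<epsilon>' > 0" using \<open>\<epsilon> > 0\<close> by (simp add: \<epsilon>'_def)
  have "\<forall>\<^sub>F z in nhds x. z \<in> S \<and> (\<forall>b\<in>Basis. norm (dir_deriv f z b - dir_deriv f x b) < \<epsilon>')"
  proof (intro eventually_conj eventually_ball_finite ballI finite_Basis)
    show "\<forall>\<^sub>F z in nhds x. z \<in> S" using assms(1,2) by (rule eventually_nhds_in_open)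
    fix b :: 'a
    have "((\<lambda>y. dir_deriv f y b) \<longlongrightarrow> dir_deriv f x b) (nhds x)"
      by (metis cont assms(1,2) continuous_on_eq_continuous_at isCont_def tendsto_at_iff_tendsto_nhds)
    then show "\<forall>\<^sub>F z in nhds x. norm (dir_deriv f z b - dir_deriv f x b) < \<epsilon>'"
      using \<open>\<epsilon>' > 0\<close> by (simp add: tendsto_iff dist_norm)
  qed
  then obtain r where "r > 0" and r: "\<And>z. dist z x < r \<Longrightarrow>
      z \<in> S \<and> (\<forall>b\<in>Basis. norm (dir_deriv f z b - dir_deriv f x b) < \<epsilon>')"
    unfolding eventually_nhds_metric by blast
  have "norm (f y - f x - (\<Sum>b\<in>Basis. ((y - x) \<bullet> b) *\<^sub>R dir_deriv f x b)) \<le> \<epsilon> * norm (y - x)"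
    if y: "norm (y - x) < r" for y
  proof -
    have "norm (f y - f x - (\<Sum>b\<in>Basis. ((y - x) \<bullet> b) *\<^sub>R dir_deriv f x b))
        \<le> \<epsilon>' * (\<Sum>b\<in>Basis. \<bar>(y - x) \<bullet> b\<bar>)"
      using increment_along_Basis_bound[of x r f \<epsilon>' Basis "y - x"] y dif r
      by (auto simp: euclidean_representation dist_commute less_imp_le)
    also have "\<dots> \<le> \<epsilon>' * (\<Sum>b\<in>(Basis::'a set). norm (y - x))"
      using \<open>\<epsilon>' > 0\<close> by (intro mult_left_mono sum_mono Basis_le_norm) auto
    also have "\<dots> = \<epsilon> * norm (y - x)" by (simp add: \<epsilon>'_def)
    finally show ?thesis .
  qed
  then show "\<exists>d>0. \<forall>y. norm (y - x) < d \<longrightarrow>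
      norm (f y - f x - (\<Sum>b\<in>Basis. ((y - x) \<bullet> b) *\<^sub>R dir_deriv f x b)) \<le> \<epsilon> * norm (y - x)"
    using \<open>r > 0\<close> by blast
qed

lemma dir_deriv_eq_derivative:
  assumes "(f has_derivative L) (at x)"
  shows "dir_deriv f x v = L v"
proof -
  have "((\<lambda>h::real. x + h *\<^sub>R v) has_derivative (\<lambda>h. h *\<^sub>R v)) (at 0)"
    by (auto intro!: derivative_eq_intros)
  then have "((\<lambda>h::real. f (x + h *\<^sub>R v)) has_derivative (\<lambda>h. L (h *\<^sub>R v))) (at 0)"
    using diff_chain_at[of "\<lambda>h. x + h *\<^sub>R v" "\<lambda>h. h *\<^sub>R v" 0 f L] assms by (simp add: o_def)
  moreover have "(\<lambda>h. L (h *\<^sub>R v)) = (\<lambda>h. h *\<^sub>R L v)"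
    using has_derivative_bounded_linear[OF assms] by (simp add: bounded_linear.linear linear_cmul)
  ultimately show ?thesis
    unfolding dir_deriv_def by (intro vector_derivative_at) (simp add: has_vector_derivative_def)
qed

lemma C_inf_on_continuous_on: "C_inf_on U F \<Longrightarrow> continuous_on U (iter_dir_deriv vs F)"
  by (simp add: C_inf_on_def)

lemma C_inf_on_has_vector_derivative_line:
  assumes "C_inf_on U F" "x \<in> U" "x = y + r0 *\<^sub>R v"
  shows "((\<lambda>r. iter_dir_deriv vs F (y + r *\<^sub>R v)) has_vector_derivative iter_dir_deriv (v # vs) F x) (at r0)"
  using has_vector_derivative_along_line[of "iter_dir_deriv vs F" x v y r0] assms
  by (simp add: C_inf_on_def)

lemma C_inf_on_has_vector_derivative_fst:
  fixes F :: "real \<times> real \<Rightarrow> 'b::real_normed_vector"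
  assumes "C_inf_on U F" "(s, u) \<in> U"
  shows "((\<lambda>r. iter_dir_deriv vs F (r, u)) has_vector_derivative iter_dir_deriv ((1, 0) # vs) F (s, u)) (at s)"
  using C_inf_on_has_vector_derivative_line[OF assms, of "(0, u)" s "(1, 0)" vs] by simp

lemma C_inf_on_has_vector_derivative_snd:
  fixes F :: "real \<times> real \<Rightarrow> 'b::real_normed_vector"
  assumes "C_inf_on U F" "(s, u) \<in> U"
  shows "((\<lambda>r. iter_dir_deriv vs F (s, r)) has_vector_derivative iter_dir_deriv ((0, 1) # vs) F (s, u)) (at u)"
  using C_inf_on_has_vector_derivative_line[OF assms, of "(s, 0)" u "(0, 1)" vs] by simp

lemma C_inf_on_has_derivative:
  fixes F :: "'a::euclidean_space \<Rightarrow> 'b::real_normed_vector"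
  assumes "C_inf_on U F" "x \<in> U"
  shows "(iter_dir_deriv vs F has_derivative (\<lambda>v. \<Sum>b\<in>Basis. (v \<bullet> b) *\<^sub>R iter_dir_deriv (b # vs) F x)) (at x)"
proof -
  have "continuous_on U (\<lambda>y. dir_deriv (iter_dir_deriv vs F) y v)" for v
    using assms(1) iter_dir_deriv.simps(2)[of v vs F] unfolding C_inf_on_def by metis
  with assms show ?thesis
    using has_derivative_of_continuous_dir_deriv[of U x "iter_dir_deriv vs F"] by (simp add: C_inf_on_def)
qed

lemma C_inf_on_mixed_partials_commute:
  fixes F :: "real \<times> real \<Rightarrow> 'b::real_normed_vector"
  assumes F: "C_inf_on U F" and "x \<in> U"
  shows "iter_dir_deriv [(0, 1), (1, 0)] F x = iter_dir_deriv [(1, 0), (0, 1)] F x"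
proof -
  obtain t e where x: "x = (t, e)" by fastforce
  have "open U" using F by (simp add: C_inf_on_def)
  show ?thesis
    unfolding x
  proof (rule mixed_partials_commute[OF \<open>open U\<close> \<open>x \<in> U\<close>[unfolded x]])
    fix r w assume rw: "(r, w) \<in> U"
    show "((\<lambda>r. F (r, w)) has_vector_derivative iter_dir_deriv [(1, 0)] F (r, w)) (at r)"
      using C_inf_on_has_vector_derivative_fst[OF F rw, of "[]"] by simp
    show "((\<lambda>w. F (r, w)) has_vector_derivative iter_dir_deriv [(0, 1)] F (r, w)) (at w)"
      using C_inf_on_has_vector_derivative_snd[OF F rw, of "[]"] by simp
    show "((\<lambda>w. iter_dir_deriv [(1, 0)] F (r, w)) has_vector_derivative
        iter_dir_deriv [(0, 1), (1, 0)] F (r, w)) (at w)"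
      using C_inf_on_has_vector_derivative_snd[OF F rw] .
    show "((\<lambda>r. iter_dir_deriv [(0, 1)] F (r, w)) has_vector_derivative
        iter_dir_deriv [(1, 0), (0, 1)] F (r, w)) (at r)"
      using C_inf_on_has_vector_derivative_fst[OF F rw] .
  qed (use F in \<open>simp_all only: C_inf_on_def\<close>)
qed

section \<open>Regular curves\<close>

lemma speed_eq_norm:
  "(c has_vector_derivative c') (at u) \<Longrightarrow> speed c u = norm c'"
  by (simp add: speed_def vector_derivative_at)

lemma unit_tangent_eq_normalize:
  "(c has_vector_derivative c') (at u) \<Longrightarrow> unit_tangent c u = c' /\<^sub>R norm c'"
  by (simp add: unit_tangent_def arc_deriv_def speed_eq_norm vector_derivative_at)

lemma norm_minus_projection_le:
  fixes P N :: "'a::real_inner"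
  assumes "norm N = 1"
  shows "norm (P - (P \<bullet> N) *\<^sub>R N) \<le> norm P"
proof -
  have "N \<bullet> N = 1"
    using assms by (simp add: dot_square_norm)
  then have "(P - (P \<bullet> N) *\<^sub>R N) \<bullet> (P - (P \<bullet> N) *\<^sub>R N) = P \<bullet> P - (P \<bullet> N)\<^sup>2"
    by (simp add: inner_diff_left inner_diff_right inner_commute power2_eq_square)
  then show ?thesis
    by (simp add: norm_eq_sqrt_inner)
qed

locale regular_curve =
  fixes c c' c'' :: "real \<Rightarrow> real^'n" and I :: "real set"
  assumes open_I: "open I"
    and c_deriv: "\<And>u. u \<in> I \<Longrightarrow> (c has_vector_derivative c' u) (at u)"
    and c'_deriv: "\<And>u. u \<in> I \<Longrightarrow> (c' has_vector_derivative c'' u) (at u)"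
    and c'_nonzero: "\<And>u. u \<in> I \<Longrightarrow> c' u \<noteq> 0"
begin

lemma speed_pos: "u \<in> I \<Longrightarrow> speed c u > 0"
  using speed_eq_norm[OF c_deriv] c'_nonzero by simp

lemma norm_unit_tangent: "u \<in> I \<Longrightarrow> norm (unit_tangent c u) = 1"
  using unit_tangent_eq_normalize[OF c_deriv] c'_nonzero by simp

lemma unit_tangent_has_vector_derivative_explicit:
  assumes "u \<in> I"
  shows "(unit_tangent c has_vector_derivative
      c'' u /\<^sub>R norm (c' u) - ((c' u \<bullet> c'' u) / norm (c' u) ^ 3) *\<^sub>R c' u) (at u)"
  using has_vector_derivative_normalize[OF c'_deriv c'_nonzero, OF assms assms]
  by (rule has_vector_derivative_transform_within_open[OF _ open_I assms])
    (simp add: unit_tangent_eq_normalize[OF c_deriv])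

lemma curvature_vec_eq:
  assumes "u \<in> I"
  shows "curvature_vec c u =
     (c'' u /\<^sub>R norm (c' u) - ((c' u \<bullet> c'' u) / norm (c' u) ^ 3) *\<^sub>R c' u) /\<^sub>R norm (c' u)"
  by (simp add: curvature_vec_def arc_deriv_def speed_eq_norm[OF c_deriv[OF assms]]
      vector_derivative_at[OF unit_tangent_has_vector_derivative_explicit[OF assms]])

lemma unit_tangent_has_vector_derivative:
  assumes "u \<in> I"
  shows "(unit_tangent c has_vector_derivative speed c u *\<^sub>R curvature_vec c u) (at u)"
proof -
  have "speed c u *\<^sub>R curvature_vec c u = vector_derivative (unit_tangent c) (at u)"
    using speed_pos[OF assms] by (simp add: curvature_vec_def arc_deriv_def)
  then show ?thesis
    using unit_tangent_has_vector_derivative_explicit[OF assms] by (simp add: vector_derivative_at)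
qed

lemma curvature_vec_differentiable:
  assumes "e \<in> I" "c'' differentiable (at e)"
  shows "curvature_vec c differentiable (at e)"
proof -
  have c': "c' differentiable (at e)"
    using c'_deriv[OF assms(1)] by (rule differentiableI_vector)
  have "(\<lambda>u. norm (c' u)) differentiable (at e)"
    using differentiable_compose[of norm c' e UNIV] differentiable_norm_at[OF c'_nonzero[OF assms(1)]] c'
    by simp
  then have "(\<lambda>u. (c'' u /\<^sub>R norm (c' u) - ((c' u \<bullet> c'' u) / norm (c' u) ^ 3) *\<^sub>R c' u) /\<^sub>R norm (c' u))
      differentiable (at e)"
    using c' assms c'_nonzero[OF assms(1)]
    by (auto intro!: differentiable_scaleR differentiable_diff differentiable_inverse differentiable_divide
        differentiable_inner differentiable_power)
  then obtain D where "((\<lambda>u. (c'' u /\<^sub>R norm (c' u) - ((c' u \<bullet> c'' u) / norm (c' u) ^ 3) *\<^sub>R c' u)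
      /\<^sub>R norm (c' u)) has_derivative D) (at e)"
    by (auto simp: differentiable_def)
  then have "(curvature_vec c has_derivative D) (at e)"
    by (rule has_derivative_transform_within_open[OF _ open_I assms(1)]) (simp add: curvature_vec_eq)
  then show ?thesis
    by (rule differentiableI)
qed

lemma curvature_vec_orthogonal_unit_tangent:
  assumes "u \<in> I"
  shows "curvature_vec c u \<bullet> unit_tangent c u = 0"
proof -
  have "((\<lambda>u. unit_tangent c u \<bullet> unit_tangent c u) has_real_derivative
      2 * (speed c u * (curvature_vec c u \<bullet> unit_tangent c u))) (at u)"
    using has_real_derivative_inner[OF unit_tangent_has_vector_derivative[OF assms]
        unit_tangent_has_vector_derivative[OF assms]]
    by (simp add: inner_commute)
  moreover have "unit_tangent c v \<bullet> unit_tangent c v = 1" if "v \<in> I" for v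
    using norm_unit_tangent[OF that] by (simp add: dot_square_norm)
  ultimately have "2 * (speed c u * (curvature_vec c u \<bullet> unit_tangent c u)) = 0"
    using has_vector_derivative_const_on_open[OF _ open_I assms]
    unfolding has_real_derivative_iff_has_vector_derivative by blast
  then show ?thesis
    using speed_pos[OF assms] by simp
qed

lemma curvature_vec_derivative_inner_unit_tangent:
  assumes "e \<in> I" "(curvature_vec c has_vector_derivative V') (at e)"
  shows "V' \<bullet> unit_tangent c e = - speed c e * (curvature c e)\<^sup>2"
proof -
  have "((\<lambda>u. curvature_vec c u \<bullet> unit_tangent c u) has_real_derivative
      speed c e * (curvature c e)\<^sup>2 + V' \<bullet> unit_tangent c e) (at e)"
    using has_real_derivative_inner[OF assms(2) unit_tangent_has_vector_derivative[OF assms(1)]]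
    by (simp add: curvature_def dot_square_norm)
  from has_vector_derivative_const_on_open[OF this[unfolded has_real_derivative_iff_has_vector_derivative]
      open_I assms(1) curvature_vec_orthogonal_unit_tangent]
  show ?thesis by simp
qed

context
  fixes e K :: real and V' :: "real^'n"
  assumes e_in: "e \<in> I"
    and curvature_vec_deriv: "(curvature_vec c has_vector_derivative V') (at e)"
    and normal_part_bound:
      "norm (V' - (V' \<bullet> unit_tangent c e) *\<^sub>R unit_tangent c e) \<le> K * speed c e * curvature c e"
begin

lemma abs_inner_curvature_vec_derivative_le:
  "\<bar>curvature_vec c e \<bullet> V'\<bar> \<le> K * speed c e * (curvature c e)\<^sup>2"
proof -
  let ?T = "unit_tangent c e"
  have "curvature_vec c e \<bullet> V' = curvature_vec c e \<bullet> (V' - (V' \<bullet> ?T) *\<^sub>R ?T)"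
    using curvature_vec_orthogonal_unit_tangent[OF e_in] by (simp add: inner_diff_right)
  also have "\<bar>\<dots>\<bar> \<le> curvature c e * norm (V' - (V' \<bullet> ?T) *\<^sub>R ?T)"
    unfolding curvature_def by (rule Cauchy_Schwarz_ineq2)
  also have "\<dots> \<le> curvature c e * (K * speed c e * curvature c e)"
    using normal_part_bound by (intro mult_left_mono) (simp_all add: curvature_def)
  finally show ?thesis
    by (simp add: power2_eq_square mult_ac)
qed

lemma curvature_derivative_bound:
  assumes d: "((\<lambda>u. curvature c u) has_real_derivative d) (at e within {0..1})" and "e \<in> {0..1}"
  shows "\<bar>(if e = 0 then -1 else 1) * d / speed c e\<bar> \<le> K * \<bar>curvature c e\<bar>"
proof -
  let ?V = "curvature_vec c" and ?S = "speed c e" and ?k = "curvature c e"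
  have d': "((\<lambda>u. norm (?V u)) has_vector_derivative d) (at e within {0..1})"
    using d by (simp add: curvature_def[abs_def] has_real_derivative_iff_has_vector_derivative)
  have "\<bar>d\<bar> \<le> K * ?S * ?k"
  proof (cases "?V e = 0")
    case False
    have "((\<lambda>u. norm (?V u)) has_vector_derivative (?V e \<bullet> V') / ?k) (at e within {0..1})"
      using has_real_derivative_norm[OF curvature_vec_deriv False]
      by (simp add: curvature_def has_real_derivative_iff_has_vector_derivative has_vector_derivative_at_within)
    then have "d = (?V e \<bullet> V') / ?k"
      using has_vector_derivative_unique_01[OF d'] \<open>e \<in> {0..1}\<close> by blast
    moreover have "?k > 0" using False by (simp add: curvature_def)
    ultimately show ?thesis
      using abs_inner_curvature_vec_derivative_le by (simp add: power2_eq_square divide_le_eq mult_ac)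
  next
    case True
    then have "V' \<bullet> unit_tangent c e = 0"
      using curvature_vec_derivative_inner_unit_tangent[OF e_in curvature_vec_deriv] by (simp add: curvature_def)
    then have "V' = 0"
      using normal_part_bound True by (simp add: curvature_def)
    then have "((\<lambda>u. norm (?V u)) has_vector_derivative 0) (at e within {0..1})"
      using has_real_derivative_norm_of_vanishing[of ?V e] curvature_vec_deriv True
      by (simp add: has_real_derivative_iff_has_vector_derivative has_vector_derivative_at_within)
    then show ?thesis
      using has_vector_derivative_unique_01[OF d'] \<open>e \<in> {0..1}\<close> True by (simp add: curvature_def)
  qed
  moreover have "\<bar>(if e = 0 then -1 else 1) * d / ?S\<bar> = \<bar>d\<bar> / ?S"
    using speed_pos[OF e_in] by (cases "e = 0") simp_all
  ultimately show ?thesis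
    using speed_pos[OF e_in] by (simp add: divide_le_eq curvature_def mult_ac)
qed

lemma torsion1_abs_le:
  assumes "curvature c e \<noteq> 0"
  shows "torsion1_abs c e \<le> K"
proof -
  let ?V = "curvature_vec c" and ?S = "speed c e" and ?k = "curvature c e" and ?T = "unit_tangent c e"
  define P where "P = V' - (V' \<bullet> ?T) *\<^sub>R ?T"
  define N where "N = ?V e /\<^sub>R ?k"
  have k: "?k > 0" and S: "?S > 0"
    using assms speed_pos[OF e_in] by (simp_all add: curvature_def)
  have "((\<lambda>u. ?V u /\<^sub>R norm (?V u)) has_vector_derivative
      V' /\<^sub>R ?k - ((?V e \<bullet> V') / ?k ^ 3) *\<^sub>R ?V e) (at e)"
    using has_vector_derivative_normalize[OF curvature_vec_deriv] assms by (simp add: curvature_def)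
  then have "torsion1_abs c e = norm ((V' /\<^sub>R ?k - ((?V e \<bullet> V') / ?k ^ 3) *\<^sub>R ?V e) /\<^sub>R ?S + ?k *\<^sub>R ?T)"
    by (simp add: torsion1_abs_def arc_deriv_def principal_normal_def[abs_def] curvature_def[abs_def]
        vector_derivative_at)
  also have "(V' /\<^sub>R ?k - ((?V e \<bullet> V') / ?k ^ 3) *\<^sub>R ?V e) /\<^sub>R ?S + ?k *\<^sub>R ?T
      = (1 / (?k * ?S)) *\<^sub>R (P - (P \<bullet> N) *\<^sub>R N)"
  proof -
    have V': "V' = P - (?S * ?k\<^sup>2) *\<^sub>R ?T"
      using curvature_vec_derivative_inner_unit_tangent[OF e_in curvature_vec_deriv] by (simp add: P_def)
    have VP: "?V e \<bullet> V' = ?V e \<bullet> P"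
      using curvature_vec_orthogonal_unit_tangent[OF e_in] by (simp add: P_def inner_diff_right)
    have "V' /\<^sub>R ?k /\<^sub>R ?S = (1 / (?k * ?S)) *\<^sub>R P - ?k *\<^sub>R ?T"
      using k S unfolding V' by (simp add: scaleR_diff_right power2_eq_square field_simps)
    moreover have "(((?V e \<bullet> V') / ?k ^ 3) *\<^sub>R ?V e) /\<^sub>R ?S = (1 / (?k * ?S)) *\<^sub>R ((P \<bullet> N) *\<^sub>R N)"
      using k S VP by (simp add: N_def inner_commute power3_eq_cube field_simps)
    ultimately show ?thesis
      by (simp add: algebra_simps scaleR_diff_right)
  qed
  also have "norm ((1 / (?k * ?S)) *\<^sub>R (P - (P \<bullet> N) *\<^sub>R N)) \<le> norm P / (?k * ?S)"
    using norm_minus_projection_le[of N P] k S by (simp add: N_def curvature_def divide_right_mono)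
  also have "\<dots> \<le> K"
    using normal_part_bound k S by (simp add: P_def pos_divide_le_eq mult_ac)
  finally show ?thesis .
qed

lemma conormal_deriv_curvature_sq_le:
  "conormal_deriv c (\<lambda>u. (curvature c u)\<^sup>2) e \<le> 2 * K * (curvature c e)\<^sup>2"
proof -
  let ?V = "curvature_vec c"
  have "(\<lambda>u. (curvature c u)\<^sup>2) = (\<lambda>u. ?V u \<bullet> ?V u)"
    by (simp add: curvature_def dot_square_norm)
  moreover have "((\<lambda>u. ?V u \<bullet> ?V u) has_real_derivative 2 * (?V e \<bullet> V')) (at e)"
    using has_real_derivative_inner[OF curvature_vec_deriv curvature_vec_deriv] by (simp add: inner_commute)
  ultimately have "deriv (\<lambda>u. (curvature c u)\<^sup>2) e = 2 * (?V e \<bullet> V')"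
    by (simp add: DERIV_imp_deriv)
  moreover have "(if e = 0 then -1 else 1) * x \<le> \<bar>x\<bar>" for x :: real
    by auto
  ultimately have "conormal_deriv c (\<lambda>u. (curvature c u)\<^sup>2) e \<le> \<bar>2 * (?V e \<bullet> V')\<bar> / speed c e"
    using speed_pos[OF e_in] by (simp add: conormal_deriv_def divide_right_mono)
  also have "\<dots> \<le> 2 * K * (curvature c e)\<^sup>2"
    using abs_inner_curvature_vec_derivative_le speed_pos[OF e_in]
    by (simp add: abs_mult pos_divide_le_eq mult_ac)
  finally show ?thesis .
qed

end

end

section \<open>The unit normal of the boundary\<close>

lemma local_defining_fn_frontier_eq_zero:
  assumes ld: "local_defining_fn \<Omega> p V \<phi>" and "open \<Omega>" "q \<in> frontier \<Omega>" "q \<in> V"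
  shows "\<phi> q = 0"
proof -
  have "open V" and "continuous_on V \<phi>" and \<Omega>V: "\<Omega> \<inter> V = {x\<in>V. \<phi> x < 0}"
    using ld C_inf_on_continuous_on[of V \<phi> "[]"] by (simp_all add: local_defining_fn_def)
  have neg: "x \<in> \<Omega> \<longleftrightarrow> \<phi> x < 0" if "x \<in> V" for x
    using \<Omega>V that by (simp add: set_eq_iff) metis
  have "q \<notin> \<Omega>" "q \<in> closure \<Omega>"
    using assms(2,3) by (simp_all add: frontier_def interior_open)
  then have "\<not> \<phi> q < 0"
    using neg[OF \<open>q \<in> V\<close>] by simp
  moreover have "\<not> \<phi> q > 0"
  proof
    assume "\<phi> q > 0"
    define A where "A = V \<inter> \<phi> -` {0<..}"
    have "open A"
      unfolding A_def by (rule continuous_open_preimage[OF \<open>continuous_on V \<phi>\<close> \<open>open V\<close> open_greaterThan])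
    moreover have "A \<inter> \<Omega> = {}"
      using neg unfolding A_def by fastforce
    ultimately have "A \<inter> closure \<Omega> = {}"
      by (simp add: open_Int_closure_eq_empty)
    then show False
      using \<open>\<phi> q > 0\<close> \<open>q \<in> V\<close> \<open>q \<in> closure \<Omega>\<close> unfolding A_def by blast
  qed
  ultimately show ?thesis by simp
qed

lemma grad_eq_sum_dir_deriv: "grad \<phi> x = (\<Sum>b\<in>Basis. dir_deriv \<phi> x b *\<^sub>R b)"
proof -
  have "grad \<phi> x \<bullet> b = dir_deriv \<phi> x b" if "b \<in> Basis" for b
    using that by (auto simp: Basis_vec_def grad_def inner_axis)
  then show ?thesis
    by (metis (no_types, lifting) euclidean_representation sum.cong)
qed

lemma C_inf_on_has_derivative_grad:
  assumes "C_inf_on V \<phi>" "x \<in> V"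
  shows "(\<phi> has_derivative (\<lambda>v. v \<bullet> grad \<phi> x)) (at x)"
  using C_inf_on_has_derivative[OF assms, of "[]"]
  by (simp add: grad_eq_sum_dir_deriv inner_sum_right mult.commute)

lemma unit_normal_of_differentiable:
  assumes "C_inf_on V \<phi>" "x \<in> V" "grad \<phi> x \<noteq> 0"
  shows "unit_normal_of \<phi> differentiable (at x)"
proof -
  have "(\<lambda>y. dir_deriv \<phi> y b) differentiable (at x)" for b
    using C_inf_on_has_derivative[OF assms(1,2), of "[b]"] by (auto intro: differentiableI)
  then have grad: "grad \<phi> differentiable (at x)"
    unfolding grad_eq_sum_dir_deriv[abs_def] by (intro differentiable_sum differentiable_scaleR) auto
  then have "(\<lambda>y. norm (grad \<phi> y)) differentiable (at x)"
    using differentiable_compose[of norm "grad \<phi>" x] differentiable_norm_at[OF assms(3)] by simp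
  then show ?thesis
    unfolding unit_normal_of_def[abs_def] using grad assms(3)
    by (intro differentiable_scaleR differentiable_inverse) auto
qed

lemma eq_projection_if_orthogonal_complement:
  fixes g m :: "'a::real_inner"
  assumes "norm m = 1" and perp: "\<And>X. X \<bullet> m = 0 \<Longrightarrow> g \<bullet> X = 0"
  shows "g = (g \<bullet> m) *\<^sub>R m"
proof -
  define X where "X = g - (g \<bullet> m) *\<^sub>R m"
  have "X \<bullet> m = 0"
    using assms(1) by (simp add: X_def inner_diff_left dot_square_norm)
  then have "X \<bullet> X = g \<bullet> X - (g \<bullet> m) * (X \<bullet> m)"
    by (simp add: X_def inner_diff_left inner_commute)
  also have "\<dots> = 0"
    using perp \<open>X \<bullet> m = 0\<close> by simp
  finally have "X = 0"
    by simp
  then show ?thesis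
    by (simp add: X_def)
qed

lemma norm_le_if_abs_inner_le:
  fixes n v :: "'a::real_inner"
  assumes "\<bar>n \<bullet> n\<bar> \<le> K * norm v * norm n" "\<bar>n \<bullet> v\<bar> \<le> K * norm v * norm v"
  shows "norm n \<le> K * norm v"
proof (cases "n = 0")
  case True
  have "0 * norm v \<le> (K * norm v) * norm v"
    using assms(2) True by simp
  then show ?thesis
    using True mult_right_le_imp_le[of 0 "norm v" "K * norm v"] by (cases "v = 0") auto
next
  case False
  have "norm n * norm n \<le> (K * norm v) * norm n"
    using assms(1) by (simp add: dot_square_norm power2_eq_square)
  then show ?thesis
    using False mult_right_le_imp_le[of "norm n" "norm n" "K * norm v"] by simp
qed

lemma frontier_curve_derivative_tangent:
  assumes "open \<Omega>" and ld: "local_defining_fn \<Omega> (\<sigma> t) V \<phi>" and "open J" "t \<in> J"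
    and on_frontier: "\<And>s. s \<in> J \<Longrightarrow> \<sigma> s \<in> frontier \<Omega> \<inter> V"
    and \<sigma>: "(\<sigma> has_vector_derivative v) (at t)"
  shows "v \<bullet> grad \<phi> (\<sigma> t) = 0"
proof -
  have "(\<phi> has_derivative (\<lambda>v. v \<bullet> grad \<phi> (\<sigma> t))) (at (\<sigma> t))"
    using ld by (intro C_inf_on_has_derivative_grad) (auto simp: local_defining_fn_def)
  with \<sigma> have "((\<lambda>s. \<phi> (\<sigma> s)) has_vector_derivative v \<bullet> grad \<phi> (\<sigma> t)) (at t)"
    by (rule has_vector_derivative_comp_has_derivative)
  moreover have "\<phi> (\<sigma> s) = 0" if "s \<in> J" for s
    using on_frontier[OF that] local_defining_fn_frontier_eq_zero[OF ld \<open>open \<Omega>\<close>] by blast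
  ultimately show ?thesis
    using has_vector_derivative_const_on_open[OF _ \<open>open J\<close> \<open>t \<in> J\<close>] by blast
qed

text \<open>Weingarten: the derivative of the unit normal along a curve in the boundary is the shape operator
  applied to the velocity, so it is tangent and bounded through the second fundamental form.\<close>

lemma unit_normal_derivative_along_frontier_curve:
  assumes "open \<Omega>" "II_bounded \<Omega> K" and ld: "local_defining_fn \<Omega> (\<sigma> t) V \<phi>" and "open J" "t \<in> J"
    and on_frontier: "\<And>s. s \<in> J \<Longrightarrow> \<sigma> s \<in> frontier \<Omega> \<inter> V"
    and \<sigma>: "(\<sigma> has_vector_derivative v) (at t)"
  obtains n' where "((\<lambda>s. unit_normal_of \<phi> (\<sigma> s)) has_vector_derivative n') (at t)" "norm n' \<le> K * norm v"
proof -
  let ?p = "\<sigma> t" and ?\<nu> = "unit_normal_of \<phi>"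
  have "C_inf_on V \<phi>" "?p \<in> V" and grad_nonzero: "\<And>x. x \<in> V \<Longrightarrow> grad \<phi> x \<noteq> 0"
    using ld by (auto simp: local_defining_fn_def)
  then obtain D\<nu> where D\<nu>: "(?\<nu> has_derivative D\<nu>) (at ?p)"
    using unit_normal_of_differentiable by (metis differentiable_def)
  have n': "((\<lambda>s. ?\<nu> (\<sigma> s)) has_vector_derivative D\<nu> v) (at t)"
    using \<sigma> D\<nu> by (rule has_vector_derivative_comp_has_derivative)
  have "?\<nu> (\<sigma> s) \<bullet> ?\<nu> (\<sigma> s) = 1" if "s \<in> J" for s
    using grad_nonzero on_frontier[OF that] by (simp add: unit_normal_of_def dot_square_norm)
  then have "?\<nu> ?p \<bullet> D\<nu> v + D\<nu> v \<bullet> ?\<nu> ?p = 0"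
    using has_vector_derivative_const_on_open[OF _ \<open>open J\<close> \<open>t \<in> J\<close>]
      has_real_derivative_inner[OF n' n'] unfolding has_real_derivative_iff_has_vector_derivative by blast
  then have n'_tangent: "D\<nu> v \<bullet> grad \<phi> ?p = 0"
    using grad_nonzero[OF \<open>?p \<in> V\<close>] by (simp add: unit_normal_of_def inner_commute)
  have v_tangent: "v \<bullet> grad \<phi> ?p = 0"
    using frontier_curve_derivative_tangent assms by blast
  have II: "\<bar>D\<nu> X \<bullet> Y\<bar> \<le> K * norm X * norm Y"
    if "X \<bullet> grad \<phi> ?p = 0" "Y \<bullet> grad \<phi> ?p = 0" for X Y
  proof -
    have "?p \<in> frontier \<Omega>"
      using on_frontier \<open>t \<in> J\<close> by blast
    then have "\<bar>dir_deriv ?\<nu> ?p X \<bullet> Y\<bar> \<le> K * norm X * norm Y"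
      using \<open>II_bounded \<Omega> K\<close> ld that unfolding II_bounded_def by blast
    then show ?thesis
      by (simp add: dir_deriv_eq_derivative[OF D\<nu>])
  qed
  have "norm (D\<nu> v) \<le> K * norm v"
    by (rule norm_le_if_abs_inner_le[OF II[OF v_tangent n'_tangent] II[OF v_tangent v_tangent]])
  with n' show ?thesis
    by (rule that)
qed

lemma normal_field_derivative_tangential_part:
  fixes G n :: "real \<Rightarrow> 'a::real_inner"
  assumes "open J" "t \<in> J" and G: "(G has_vector_derivative W) (at t)" and n: "(n has_vector_derivative n') (at t)"
    and unit: "\<And>s. s \<in> J \<Longrightarrow> norm (n s) = 1"
    and parallel: "\<And>s. s \<in> J \<Longrightarrow> G s = (G s \<bullet> n s) *\<^sub>R n s"
    and "G t \<noteq> 0"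
  shows "norm (W - (W \<bullet> (G t /\<^sub>R norm (G t))) *\<^sub>R (G t /\<^sub>R norm (G t))) = norm (G t) * norm n'"
proof -
  define a where "a = G t \<bullet> n t"
  have "n s \<bullet> n s = 1" if "s \<in> J" for s
    using unit[OF that] by (simp add: dot_square_norm)
  then have "n t \<bullet> n' + n' \<bullet> n t = 0"
    using has_vector_derivative_const_on_open[OF _ \<open>open J\<close> \<open>t \<in> J\<close>] has_real_derivative_inner[OF n n]
    unfolding has_real_derivative_iff_has_vector_derivative by blast
  then have nn': "n' \<bullet> n t = 0"
    by (simp add: inner_commute)
  have "((\<lambda>s. (G s \<bullet> n s) *\<^sub>R n s) has_vector_derivative
      a *\<^sub>R n' + (G t \<bullet> n' + W \<bullet> n t) *\<^sub>R n t) (at t)"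
    using has_vector_derivative_scaleR[OF has_real_derivative_inner[OF G n] n] by (simp add: a_def)
  then have W: "W = a *\<^sub>R n' + (G t \<bullet> n' + W \<bullet> n t) *\<^sub>R n t"
    using has_vector_derivative_unique_on_open[OF G _ \<open>open J\<close> \<open>t \<in> J\<close>] parallel by blast
  have Gt: "G t = a *\<^sub>R n t"
    using parallel[OF \<open>t \<in> J\<close>] by (simp add: a_def)
  have "norm (n t) = 1"
    using unit[OF \<open>t \<in> J\<close>] .
  then have "norm (G t) = \<bar>a\<bar>" and "a \<noteq> 0"
    using Gt \<open>G t \<noteq> 0\<close> by auto
  then have "G t /\<^sub>R norm (G t) = sgn a *\<^sub>R n t"
    using Gt by (simp add: sgn_if)
  then have "(W \<bullet> (G t /\<^sub>R norm (G t))) *\<^sub>R (G t /\<^sub>R norm (G t)) = (W \<bullet> n t) *\<^sub>R n t"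
    using \<open>a \<noteq> 0\<close> by (simp add: mult.assoc[symmetric])
  moreover have "G t \<bullet> n' = 0"
    using Gt nn' by (simp add: inner_commute)
  with W have "W - (W \<bullet> n t) *\<^sub>R n t = a *\<^sub>R n'"
    by (metis add_diff_cancel_right' add_0)
  ultimately have "W - (W \<bullet> (G t /\<^sub>R norm (G t))) *\<^sub>R (G t /\<^sub>R norm (G t)) = a *\<^sub>R n'"
    by simp
  then show ?thesis
    using \<open>norm (G t) = \<bar>a\<bar>\<close> by simp
qed

lemma free_boundary_normal_part_bound:
  fixes \<sigma> G :: "real \<Rightarrow> real^'n"
  assumes bdry: "smooth_boundary \<Omega>" and "II_bounded \<Omega> K" and "open J" "t \<in> J"
    and on_frontier: "\<And>s. s \<in> J \<Longrightarrow> \<sigma> s \<in> frontier \<Omega>" and "continuous_on J \<sigma>"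
    and \<sigma>: "(\<sigma> has_vector_derivative v) (at t)"
    and perp: "\<And>s X. s \<in> J \<Longrightarrow> X \<in> bdry_tangent_space \<Omega> (\<sigma> s) \<Longrightarrow> G s \<bullet> X = 0"
    and G: "(G has_vector_derivative W) (at t)" and "G t \<noteq> 0"
  shows "norm (W - (W \<bullet> (G t /\<^sub>R norm (G t))) *\<^sub>R (G t /\<^sub>R norm (G t))) \<le> K * norm (G t) * norm v"
proof -
  obtain V \<phi> where ld: "local_defining_fn \<Omega> (\<sigma> t) V \<phi>"
    using bdry on_frontier[OF \<open>t \<in> J\<close>] unfolding smooth_boundary_def by blast
  define J' where "J' = J \<inter> \<sigma> -` V"
  have "open J'"
    using continuous_open_preimage[OF \<open>continuous_on J \<sigma>\<close> \<open>open J\<close>] ld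
    by (simp add: J'_def local_defining_fn_def)
  have "t \<in> J'"
    using ld \<open>t \<in> J\<close> by (simp add: J'_def local_defining_fn_def)
  have ld': "local_defining_fn \<Omega> (\<sigma> s) V \<phi>" if "s \<in> J'" for s
    using ld that by (simp add: J'_def local_defining_fn_def)
  have unit: "norm (unit_normal_of \<phi> (\<sigma> s)) = 1" if "s \<in> J'" for s
    using ld'[OF that] by (simp add: local_defining_fn_def unit_normal_of_def)
  have "G s = (G s \<bullet> unit_normal_of \<phi> (\<sigma> s)) *\<^sub>R unit_normal_of \<phi> (\<sigma> s)" if "s \<in> J'" for s
  proof (rule eq_projection_if_orthogonal_complement[OF unit[OF that]])
    fix X assume "X \<bullet> unit_normal_of \<phi> (\<sigma> s) = 0"
    then have "X \<bullet> grad \<phi> (\<sigma> s) = 0"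
      using ld'[OF that] by (simp add: unit_normal_of_def local_defining_fn_def)
    then show "G s \<bullet> X = 0"
      using perp ld'[OF that] that by (auto simp: J'_def bdry_tangent_space_def)
  qed
  moreover obtain n' where n': "((\<lambda>s. unit_normal_of \<phi> (\<sigma> s)) has_vector_derivative n') (at t)"
    and "norm n' \<le> K * norm v"
    using unit_normal_derivative_along_frontier_curve[OF _ \<open>II_bounded \<Omega> K\<close> ld \<open>open J'\<close> \<open>t \<in> J'\<close> _ \<sigma>]
      bdry on_frontier by (auto simp: smooth_boundary_def J'_def)
  ultimately have "norm (W - (W \<bullet> (G t /\<^sub>R norm (G t))) *\<^sub>R (G t /\<^sub>R norm (G t))) = norm (G t) * norm n'"
    using normal_field_derivative_tangential_part[OF \<open>open J'\<close> \<open>t \<in> J'\<close> G n' unit] \<open>G t \<noteq> 0\<close> by blast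
  also have "\<dots> \<le> K * norm (G t) * norm v"
    using mult_right_mono[OF \<open>norm n' \<le> K * norm v\<close> norm_ge_zero[of "G t"]] by (simp add: mult_ac)
  finally show ?thesis .
qed

section \<open>Curve shortening flow with free boundary\<close>

lemma C_inf_on_regular_curve:
  fixes \<gamma> :: "real \<times> real \<Rightarrow> real^'n"
  assumes "C_inf_on U \<gamma>"
  shows "regular_curve (\<lambda>v. \<gamma> (t, v)) (\<lambda>u. iter_dir_deriv [(0, 1)] \<gamma> (t, u))
      (\<lambda>u. iter_dir_deriv [(0, 1), (0, 1)] \<gamma> (t, u)) {u. (t, u) \<in> U \<and> iter_dir_deriv [(0, 1)] \<gamma> (t, u) \<noteq> 0}"
proof unfold_locales
  have "open (U \<inter> iter_dir_deriv [(0, 1)] \<gamma> -` (- {0}))"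
    using assms by (intro continuous_open_preimage C_inf_on_continuous_on) (auto simp: C_inf_on_def)
  then have "open ((\<lambda>u. (t, u)) -` (U \<inter> iter_dir_deriv [(0, 1)] \<gamma> -` (- {0})))"
    by (rule continuous_open_vimage) (intro continuous_intros)
  then show "open {u. (t, u) \<in> U \<and> iter_dir_deriv [(0, 1)] \<gamma> (t, u) \<noteq> 0}"
    by (simp add: vimage_def)
qed (use C_inf_on_has_vector_derivative_snd[OF assms, of t _ "[]"]
       C_inf_on_has_vector_derivative_snd[OF assms, of t _ "[(0, 1)]"] in auto)

lemma csf_curvature_vec_derivative:
  fixes \<gamma> :: "real \<times> real \<Rightarrow> real^'n"
  assumes smooth: "C_inf_on U \<gamma>" and "{t} \<times> {0..1} \<subseteq> U" "e \<in> {0..1}"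
    and csf: "\<And>u. u \<in> {0..1} \<Longrightarrow> vector_derivative (\<lambda>r. \<gamma> (r, u)) (at t) = curvature_vec (\<lambda>v. \<gamma> (t, v)) u"
    and V': "(curvature_vec (\<lambda>v. \<gamma> (t, v)) has_vector_derivative V') (at e)"
  shows "V' = iter_dir_deriv [(1, 0), (0, 1)] \<gamma> (t, e)"
proof -
  have te: "(t, e) \<in> U"
    using assms(2,3) by blast
  have "iter_dir_deriv [(1, 0)] \<gamma> (t, u) = curvature_vec (\<lambda>v. \<gamma> (t, v)) u" if "u \<in> {0..1}" for u
  proof -
    have "(t, u) \<in> U"
      using assms(2) that by blast
    then show ?thesis
      using csf[OF that] vector_derivative_at[OF C_inf_on_has_vector_derivative_fst[OF smooth, of t u "[]"]]
      by simp
  qed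
  then have "((\<lambda>u. iter_dir_deriv [(1, 0)] \<gamma> (t, u)) has_vector_derivative V') (at e within {0..1})"
    by (rule has_vector_derivative_transform[OF \<open>e \<in> {0..1}\<close> _ has_vector_derivative_at_within[OF V']])
  moreover have "((\<lambda>u. iter_dir_deriv [(1, 0)] \<gamma> (t, u)) has_vector_derivative
      iter_dir_deriv [(0, 1), (1, 0)] \<gamma> (t, e)) (at e within {0..1})"
    using C_inf_on_has_vector_derivative_snd[OF smooth te, of "[(1, 0)]"]
    by (rule has_vector_derivative_at_within)
  ultimately have "V' = iter_dir_deriv [(0, 1), (1, 0)] \<gamma> (t, e)"
    using has_vector_derivative_unique_01 \<open>e \<in> {0..1}\<close> by blast
  also have "\<dots> = iter_dir_deriv [(1, 0), (0, 1)] \<gamma> (t, e)"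
    using C_inf_on_mixed_partials_commute[OF smooth te] .
  finally show ?thesis .
qed

lemma free_boundary_mixed_partial_normal_part_bound:
  fixes \<gamma> :: "real \<times> real \<Rightarrow> real^'n"
  assumes bdry: "smooth_boundary \<Omega>" and II: "II_bounded \<Omega> K" and smooth: "C_inf_on U \<gamma>"
    and free_bdry: "\<forall>s\<in>{t0<..<t1}. \<gamma> (s, e) \<in> frontier \<Omega> \<and>
      (\<forall>X\<in>bdry_tangent_space \<Omega> (\<gamma> (s, e)). unit_tangent (\<lambda>v. \<gamma> (s, v)) e \<bullet> X = 0)"
    and t: "t \<in> {t0<..<t1}" and te: "(t, e) \<in> U" and nonzero: "iter_dir_deriv [(0, 1)] \<gamma> (t, e) \<noteq> 0"
  shows "norm (iter_dir_deriv [(1, 0), (0, 1)] \<gamma> (t, e)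
      - (iter_dir_deriv [(1, 0), (0, 1)] \<gamma> (t, e) \<bullet> unit_tangent (\<lambda>v. \<gamma> (t, v)) e) *\<^sub>R unit_tangent (\<lambda>v. \<gamma> (t, v)) e)
    \<le> K * norm (iter_dir_deriv [(0, 1)] \<gamma> (t, e)) * norm (iter_dir_deriv [(1, 0)] \<gamma> (t, e))"
proof -
  define J where "J = {t0<..<t1} \<inter> (\<lambda>s. (s, e)) -` U"
  have "open J"
    using smooth unfolding J_def C_inf_on_def
    by (intro open_Int open_greaterThanLessThan continuous_open_vimage) (auto intro: continuous_intros)
  have "t \<in> J"
    using t te by (simp add: J_def)
  have G: "((\<lambda>u. \<gamma> (s, u)) has_vector_derivative iter_dir_deriv [(0, 1)] \<gamma> (s, e)) (at e)" if "s \<in> J" for s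
    using C_inf_on_has_vector_derivative_snd[OF smooth, of s e "[]"] that by (simp add: J_def)
  have \<sigma>: "((\<lambda>s. \<gamma> (s, e)) has_vector_derivative iter_dir_deriv [(1, 0)] \<gamma> (s, e)) (at s)" if "s \<in> J" for s
    using C_inf_on_has_vector_derivative_fst[OF smooth, of s e "[]"] that by (simp add: J_def)
  have "continuous_on J (\<lambda>s. \<gamma> (s, e))"
    using \<sigma> by (intro continuous_at_imp_continuous_on ballI has_vector_derivative_continuous) blast
  moreover have "iter_dir_deriv [(0, 1)] \<gamma> (s, e) \<bullet> X = 0"
    if "s \<in> J" "X \<in> bdry_tangent_space \<Omega> (\<gamma> (s, e))" for s X
  proof -
    have "unit_tangent (\<lambda>v. \<gamma> (s, v)) e \<bullet> X = 0"
      using free_bdry that by (simp add: J_def)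
    then have "(iter_dir_deriv [(0, 1)] \<gamma> (s, e) /\<^sub>R norm (iter_dir_deriv [(0, 1)] \<gamma> (s, e))) \<bullet> X = 0"
      using unit_tangent_eq_normalize[OF G[OF \<open>s \<in> J\<close>]] by simp
    then show ?thesis
      by (cases "iter_dir_deriv [(0, 1)] \<gamma> (s, e) = 0") auto
  qed
  ultimately show ?thesis
    using free_boundary_normal_part_bound[OF bdry II \<open>open J\<close> \<open>t \<in> J\<close> _ _ \<sigma>[OF \<open>t \<in> J\<close>] _
        C_inf_on_has_vector_derivative_fst[OF smooth te, of "[(0, 1)]"]]
      free_bdry nonzero unit_tangent_eq_normalize[OF G[OF \<open>t \<in> J\<close>]]
    by (simp add: J_def)
qed

lemma csf_free_boundary_curvature_vec_derivative_bound:
  fixes \<gamma> :: "real \<times> real \<Rightarrow> real^'n"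
  assumes bdry: "smooth_boundary \<Omega>" and II: "II_bounded \<Omega> K" and smooth: "C_inf_on U \<gamma>"
    and dom: "{t} \<times> {0..1} \<subseteq> U" and t: "t \<in> {t0<..<t1}" and "e \<in> {0..1}"
    and csf: "\<And>u. u \<in> {0..1} \<Longrightarrow> vector_derivative (\<lambda>r. \<gamma> (r, u)) (at t) = curvature_vec (\<lambda>v. \<gamma> (t, v)) u"
    and free_bdry: "\<forall>s\<in>{t0<..<t1}. \<gamma> (s, e) \<in> frontier \<Omega> \<and>
      (\<forall>X\<in>bdry_tangent_space \<Omega> (\<gamma> (s, e)). unit_tangent (\<lambda>v. \<gamma> (s, v)) e \<bullet> X = 0)"
    and nonzero: "iter_dir_deriv [(0, 1)] \<gamma> (t, e) \<noteq> 0"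
    and V': "(curvature_vec (\<lambda>v. \<gamma> (t, v)) has_vector_derivative V') (at e)"
  shows "norm (V' - (V' \<bullet> unit_tangent (\<lambda>v. \<gamma> (t, v)) e) *\<^sub>R unit_tangent (\<lambda>v. \<gamma> (t, v)) e)
    \<le> K * speed (\<lambda>v. \<gamma> (t, v)) e * curvature (\<lambda>v. \<gamma> (t, v)) e"
proof -
  have te: "(t, e) \<in> U"
    using dom \<open>e \<in> {0..1}\<close> by blast
  have "V' = iter_dir_deriv [(1, 0), (0, 1)] \<gamma> (t, e)"
    by (rule csf_curvature_vec_derivative[OF smooth dom \<open>e \<in> {0..1}\<close> csf V'])
  moreover have "speed (\<lambda>v. \<gamma> (t, v)) e = norm (iter_dir_deriv [(0, 1)] \<gamma> (t, e))"
    using C_inf_on_has_vector_derivative_snd[OF smooth te, of "[]"] by (simp add: speed_eq_norm)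
  moreover have "curvature (\<lambda>v. \<gamma> (t, v)) e = norm (iter_dir_deriv [(1, 0)] \<gamma> (t, e))"
    using csf[OF \<open>e \<in> {0..1}\<close>] vector_derivative_at[OF C_inf_on_has_vector_derivative_fst[OF smooth te, of "[]"]]
    by (simp add: curvature_def)
  ultimately show ?thesis
    using free_boundary_mixed_partial_normal_part_bound[OF bdry II smooth free_bdry t te nonzero] by simp
qed

theorem mainTheorem3:
  fixes \<Omega> :: "(real^'n) set" and K t0 t1 t e :: real
    and \<gamma> :: "real \<times> real \<Rightarrow> real^'n" and U :: "(real \<times> real) set"
  assumes dim: "CARD('n) \<ge> 2"
    and bdry: "smooth_boundary \<Omega>"
    and II: "II_bounded \<Omega> K"
    and smooth: "C_inf_on U \<gamma>" and dom: "{t0<..<t1} \<times> {0..1} \<subseteq> U"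
    and regular: "\<forall>s\<in>{t0<..<t1}. \<forall>u\<in>{0..1}. vector_derivative (\<lambda>v. \<gamma> (s, v)) (at u) \<noteq> 0"
    and csf: "\<forall>s\<in>{t0<..<t1}. \<forall>u\<in>{0..1}.
               vector_derivative (\<lambda>r. \<gamma> (r, u)) (at s) = curvature_vec (\<lambda>v. \<gamma> (s, v)) u"
    and free_bdry: "\<forall>s\<in>{t0<..<t1}. \<forall>b\<in>{0,1}. \<gamma> (s, b) \<in> frontier \<Omega> \<and>
               (\<forall>X\<in>bdry_tangent_space \<Omega> (\<gamma> (s, b)). unit_tangent (\<lambda>v. \<gamma> (s, v)) b \<bullet> X = 0)"
    and t: "t \<in> {t0<..<t1}" and e: "e \<in> {0, 1}"
  shows "(\<forall>d. ((\<lambda>u. curvature (\<lambda>v. \<gamma> (t, v)) u) has_real_derivative d) (at e within {0..1}) \<longrightarrow>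
            \<bar>(if e = 0 then -1 else 1) * d / speed (\<lambda>v. \<gamma> (t, v)) e\<bar>
              \<le> K * \<bar>curvature (\<lambda>v. \<gamma> (t, v)) e\<bar>)
     \<and> (curvature (\<lambda>v. \<gamma> (t, v)) e \<noteq> 0 \<longrightarrow> torsion1_abs (\<lambda>v. \<gamma> (t, v)) e \<le> K)
     \<and> conormal_deriv (\<lambda>v. \<gamma> (t, v)) (\<lambda>u. (curvature (\<lambda>v. \<gamma> (t, v)) u)\<^sup>2) e
         \<le> 2 * K * (curvature (\<lambda>v. \<gamma> (t, v)) e)\<^sup>2"
proof -
  define c where "c = (\<lambda>v. \<gamma> (t, v))"
  define I where "I = {u. (t, u) \<in> U \<and> iter_dir_deriv [(0, 1)] \<gamma> (t, u) \<noteq> 0}"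
  interpret regular_curve c "\<lambda>u. iter_dir_deriv [(0, 1)] \<gamma> (t, u)" "\<lambda>u. iter_dir_deriv [(0, 1), (0, 1)] \<gamma> (t, u)" I
    unfolding c_def I_def by (rule C_inf_on_regular_curve[OF smooth])
  have "e \<in> {0..1}" and slice: "{t} \<times> {0..1} \<subseteq> U"
    using dom t e by auto
  then have "(t, e) \<in> U"
    by blast
  have "vector_derivative c (at e) \<noteq> 0"
    using regular t \<open>e \<in> {0..1}\<close> by (simp add: c_def)
  then have "e \<in> I"
    using C_inf_on_has_vector_derivative_snd[OF smooth \<open>(t, e) \<in> U\<close>, of "[]"] \<open>(t, e) \<in> U\<close>
    by (simp add: I_def c_def vector_derivative_at)
  have "curvature_vec c differentiable (at e)"
    using curvature_vec_differentiable[OF \<open>e \<in> I\<close>]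
      C_inf_on_has_vector_derivative_snd[OF smooth \<open>(t, e) \<in> U\<close>, of "[(0, 1), (0, 1)]"]
    by (blast intro: differentiableI_vector)
  then obtain V' where V': "(curvature_vec c has_vector_derivative V') (at e)"
    using vector_derivative_works by blast
  have bound: "norm (V' - (V' \<bullet> unit_tangent c e) *\<^sub>R unit_tangent c e) \<le> K * speed c e * curvature c e"
    unfolding c_def
    using csf_free_boundary_curvature_vec_derivative_bound[OF bdry II smooth slice t \<open>e \<in> {0..1}\<close> _ _ _ V'[unfolded c_def]]
      csf free_bdry t e \<open>e \<in> I\<close> by (auto simp: I_def)
  show ?thesis
    using curvature_derivative_bound[OF \<open>e \<in> I\<close> V' bound] torsion1_abs_le[OF \<open>e \<in> I\<close> V' bound]
      conormal_deriv_curvature_sq_le[OF \<open>e \<in> I\<close> V' bound] \<open>e \<in> {0..1}\<close>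
    unfolding c_def by blast
qed

end
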